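(* Let $G(V_1,V_2,E)$ be a $(2,d,\epsilon)$-expander with $\epsilon\le 1/4$, and let $\mathbf{A}\in\{0,1\}^{m\times n}$ be its bi-adjacency matrix ($n=|V_1|$, $m=|V_2|$). Let $\mathbf{w}\in\mathbb{R}^n$ satisfy $\mathbf{A}\mathbf{w}=\mathbf{0}$, and let $S=\{i\}$ be any singleton with $i\in\{1,\dots,n\}$. Then $$\|\mathbf{w}_S\|_1\le 2\epsilon\,\|\mathbf{w}_{S^c}\|_1 .$$
   Context: A bipartite graph $G(X,Y,H)$ has vertex classes $X$ (left) and $Y$ (right) and edge set $H\subset X\times Y$. Its bi-adjacency matrix is the $|Y|\times|X|$ $0/1$ matrix whose column $j$ corresponds to left vertex $j\in X$, row $i$ to right vertex $i\in Y$, with entry $1$ iff the two vertices are adjacent. $G$ is left $d$-regular if every vertex of $X$ has degree $d$. A left $d$-regular bipartite graph is a $(\phi,d,\epsilon)$-expander if every $\Phi\subset X$ with $|\Phi|\le\phi$ satisfies $|N(\Phi)|\ge(1-\epsilon)d|\Phi|$, where $N(\Phi)\subset Y$ is the set of neighbours of $\Phi$. For $S\subset\{1,\dots,n\}$ and $\mathbf{x}\in\mathbb{R}^n$, $\mathbf{x}_S\in\mathbb{R}^n$ is the vector with $(x_S)_i=x_i$ for $i\in S$ and $0$ otherwise; $S^c$ is the complement of $S$ in $\{1,\dots,n\}$. *)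

theory Defs
  imports Complex_Main
begin

text \<open>Bipartite graph G(X,Y,H): left vertices X, right vertices Y, edges H \<subseteq> X \<times> Y.\<close>

definition nbhd :: "('a \<times> 'b) set \<Rightarrow> 'a set \<Rightarrow> 'b set" where
  "nbhd H Phi = {y. \<exists>x\<in>Phi. (x, y) \<in> H}"

definition left_regular :: "'a set \<Rightarrow> 'b set \<Rightarrow> ('a \<times> 'b) set \<Rightarrow> nat \<Rightarrow> bool" where
  "left_regular X Y H d \<longleftrightarrow> H \<subseteq> X \<times> Y \<and> (\<forall>x\<in>X. card {y\<in>Y. (x, y) \<in> H} = d)"

definition expander :: "'a set \<Rightarrow> 'b set \<Rightarrow> ('a \<times> 'b) set \<Rightarrow> nat \<Rightarrow> nat \<Rightarrow> real \<Rightarrow> bool" where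
  "expander X Y H phi d eps \<longleftrightarrow> left_regular X Y H d \<and>
     (\<forall>Phi. Phi \<subseteq> X \<and> card Phi \<le> phi \<longrightarrow>
        real (card (nbhd H Phi)) \<ge> (1 - eps) * real d * real (card Phi))"

text \<open>Bi-adjacency matrix: entry (i,j) for right vertex i and left vertex j.\<close>
definition biadj :: "(nat \<times> nat) set \<Rightarrow> nat \<Rightarrow> nat \<Rightarrow> real" where
  "biadj H i j = (if (j, i) \<in> H then 1 else 0)"

definition mat_vec :: "nat \<Rightarrow> (nat \<Rightarrow> nat \<Rightarrow> real) \<Rightarrow> (nat \<Rightarrow> real) \<Rightarrow> nat \<Rightarrow> real" where
  "mat_vec n A w = (\<lambda>i. \<Sum>j=1..n. A i j * w j)"

definition vrestrict :: "nat set \<Rightarrow> (nat \<Rightarrow> real) \<Rightarrow> nat \<Rightarrow> real" where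
  "vrestrict S x = (\<lambda>k. if k \<in> S then x k else 0)"

definition l1norm :: "nat \<Rightarrow> (nat \<Rightarrow> real) \<Rightarrow> real" where
  "l1norm n x = (\<Sum>k=1..n. \<bar>x k\<bar>)"

end

theory Submission
  imports Defs
begin

(* Write N(x) for the neighbourhood of a left vertex x.
   (1) In a (2,d,eps)-expander two distinct left vertices i, j have
       |N(i) \<union> N(j)| \<ge> 2(1-eps)d, hence by inclusion-exclusion they share
       at most 2 eps d right neighbours.
   (2) Every row r \<in> N(i) of the equation A w = 0 isolates w_i:
       |w_i| \<le> \<Sum>_{j\<noteq>i} A_rj |w_j|.
   (3) Summing (2) over the d rows of N(i) and exchanging the sums, the
       coefficient of |w_j| is |N(i) \<inter> N(j)| \<le> 2 eps d by (1); dividing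
       by d gives |w_i| \<le> 2 eps \<Sum>_{j\<noteq>i} |w_j|. *)

lemma nbhd_pair: "nbhd H {x, y} = nbhd H {x} \<union> nbhd H {y}"
  unfolding nbhd_def by auto

lemma left_regular_card_nbhd:
  assumes "left_regular X Y H d" and "x \<in> X"
  shows "card (nbhd H {x}) = d"
proof -
  have "nbhd H {x} = {y\<in>Y. (x, y) \<in> H}"
    using assms(1) unfolding left_regular_def nbhd_def by auto
  then show ?thesis using assms unfolding left_regular_def by auto
qed

lemma finite_nbhd:
  assumes "H \<subseteq> X \<times> Y" and "finite Y"
  shows "finite (nbhd H Phi)"
  using assms by (auto simp: nbhd_def intro: finite_subset)

lemma expander_common_neighbours:
  assumes exp: "expander X Y H phi d eps" and "phi \<ge> 2" and "finite Y"
    and "i \<in> X" and "j \<in> X" and "i \<noteq> j"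
  shows "real (card (nbhd H {i} \<inter> nbhd H {j})) \<le> 2 * eps * d"
proof -
  have reg: "left_regular X Y H d" using exp unfolding expander_def by simp
  then have fin: "finite (nbhd H {x})" for x
    using \<open>finite Y\<close> finite_nbhd unfolding left_regular_def by blast
  have expansion: "\<And>Phi. Phi \<subseteq> X \<Longrightarrow> card Phi \<le> phi \<Longrightarrow>
      (1 - eps) * real d * real (card Phi) \<le> real (card (nbhd H Phi))"
    using exp unfolding expander_def by blast
  have "{i, j} \<subseteq> X" "card {i, j} = 2"
    using assms(4-6) by auto
  then have big_union: "real (card (nbhd H {i, j})) \<ge> (1 - eps) * real d * 2"
    using expansion[of "{i, j}"] \<open>phi \<ge> 2\<close> by auto
  have "card (nbhd H {i} \<union> nbhd H {j}) + card (nbhd H {i} \<inter> nbhd H {j})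
      = card (nbhd H {i}) + card (nbhd H {j})"
    using card_Un_Int[OF fin fin] by simp
  also have "\<dots> = 2 * d"
    using left_regular_card_nbhd[OF reg] assms(4,5) by simp
  finally have incl_excl:
    "real (card (nbhd H {i, j})) + real (card (nbhd H {i} \<inter> nbhd H {j})) = 2 * real d"
    by (simp add: nbhd_pair flip: of_nat_add)
  show ?thesis using big_union incl_excl by (simp add: algebra_simps)
qed

lemma null_vector_row_bound:
  assumes "mat_vec n (biadj H) w r = 0" and "(i, r) \<in> H" and "i \<in> {1..n}"
  shows "\<bar>w i\<bar> \<le> (\<Sum>j\<in>{1..n} - {i}. biadj H r j * \<bar>w j\<bar>)"
proof -
  have "0 = (\<Sum>j=1..n. biadj H r j * w j)"
    using assms(1) unfolding mat_vec_def by simp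
  also have "\<dots> = w i + (\<Sum>j\<in>{1..n} - {i}. biadj H r j * w j)"
    using assms(2,3) by (simp add: sum.remove biadj_def)
  finally have "\<bar>w i\<bar> = \<bar>\<Sum>j\<in>{1..n} - {i}. biadj H r j * w j\<bar>" by linarith
  also have "\<dots> \<le> (\<Sum>j\<in>{1..n} - {i}. \<bar>biadj H r j * w j\<bar>)" by (rule sum_abs)
  also have "\<dots> = (\<Sum>j\<in>{1..n} - {i}. biadj H r j * \<bar>w j\<bar>)"
    by (rule sum.cong) (auto simp: biadj_def abs_mult)
  finally show ?thesis .
qed

lemma sum_biadj_nbhd:
  assumes "finite (nbhd H {i})"
  shows "(\<Sum>r\<in>nbhd H {i}. biadj H r j) = real (card (nbhd H {i} \<inter> nbhd H {j}))"
proof -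
  have "(\<Sum>r\<in>nbhd H {i}. biadj H r j) = (\<Sum>r\<in>nbhd H {i}. if r \<in> nbhd H {j} then 1 else 0)"
    by (rule sum.cong) (auto simp: biadj_def nbhd_def)
  also have "\<dots> = real (card {r \<in> nbhd H {i}. r \<in> nbhd H {j}})"
    using assms by (simp flip: sum.inter_filter)
  finally show ?thesis by (simp add: Collect_conj_eq Int_commute)
qed

lemma expander_null_vector_entry_bound:
  assumes exp: "expander {1..n} {1..m} H 2 d eps" and "d \<ge> 1"
    and null: "\<forall>r\<in>{1..m}. mat_vec n (biadj H) w r = 0"
    and i: "i \<in> {1..n}"
  shows "\<bar>w i\<bar> \<le> 2 * eps * (\<Sum>j\<in>{1..n} - {i}. \<bar>w j\<bar>)"
proof -
  let ?N = "nbhd H {i}" and ?J = "{1..n} - {i}"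
  have reg: "left_regular {1..n} {1..m} H d" using exp unfolding expander_def by simp
  then have HXY: "H \<subseteq> {1..n} \<times> {1..m}" unfolding left_regular_def by simp
  have finN: "finite ?N" using finite_nbhd[OF HXY] by simp
  have row: "\<bar>w i\<bar> \<le> (\<Sum>j\<in>?J. biadj H r j * \<bar>w j\<bar>)" if "r \<in> ?N" for r
    using that HXY null i by (intro null_vector_row_bound) (auto simp: nbhd_def)
  have "real d * \<bar>w i\<bar> = (\<Sum>r\<in>?N. \<bar>w i\<bar>)"
    using left_regular_card_nbhd[OF reg i] by simp
  also have "\<dots> \<le> (\<Sum>r\<in>?N. \<Sum>j\<in>?J. biadj H r j * \<bar>w j\<bar>)"
    by (rule sum_mono) (rule row)
  also have "\<dots> = (\<Sum>j\<in>?J. (\<Sum>r\<in>?N. biadj H r j) * \<bar>w j\<bar>)"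
    by (subst sum.swap) (simp add: sum_distrib_right)
  also have "\<dots> \<le> (\<Sum>j\<in>?J. (2 * eps * d) * \<bar>w j\<bar>)"
    using expander_common_neighbours[OF exp _ _ i] i
    by (intro sum_mono mult_right_mono) (auto simp: sum_biadj_nbhd[OF finN])
  also have "\<dots> = real d * (2 * eps * (\<Sum>j\<in>?J. \<bar>w j\<bar>))"
    by (simp add: sum_distrib_left algebra_simps)
  finally show ?thesis
    using \<open>d \<ge> 1\<close> by (simp add: mult_le_cancel_left_pos)
qed

lemma l1norm_vrestrict:
  assumes "S \<subseteq> {1..n}"
  shows "l1norm n (vrestrict S x) = (\<Sum>k\<in>S. \<bar>x k\<bar>)"
proof -
  have "l1norm n (vrestrict S x) = (\<Sum>k\<in>{1..n}. if k \<in> S then \<bar>x k\<bar> else 0)"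
    unfolding l1norm_def vrestrict_def by (rule sum.cong) auto
  also have "\<dots> = (\<Sum>k\<in>S. \<bar>x k\<bar>)"
    using assms by (simp add: sum.If_cases Int_absorb1)
  finally show ?thesis .
qed

theorem lemma1:
  fixes n m d :: nat and eps :: real and H :: "(nat \<times> nat) set"
    and w :: "nat \<Rightarrow> real" and i :: nat
  assumes "expander {1..n} {1..m} H 2 d eps"
    and "d \<ge> 1"
    and "eps \<le> 1/4"
    and "\<forall>r\<in>{1..m}. mat_vec n (biadj H) w r = 0"
    and "i \<in> {1..n}"
  shows "l1norm n (vrestrict {i} w) \<le> 2 * eps * l1norm n (vrestrict ({1..n} - {i}) w)"
proof -
  have "l1norm n (vrestrict {i} w) = \<bar>w i\<bar>"
    using assms(5) by (simp add: l1norm_vrestrict)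
  moreover have "l1norm n (vrestrict ({1..n} - {i}) w) = (\<Sum>j\<in>{1..n} - {i}. \<bar>w j\<bar>)"
    by (simp add: l1norm_vrestrict)
  ultimately show ?thesis
    using expander_null_vector_entry_bound[OF assms(1,2,4,5)] by simp
qed

end
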